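(* Let $N\ge3$ and let $T_{ab}$ be a rank-2 tensor. The following are equivalent: (i) $T_{ac}T_b{}^c=fg_{ab}$ for some real $f\neq0$; (ii) for some $f>0$, both $T_{ac}T_b{}^c=fg_{ab}$ and $T_{ca}T^c{}_b=fg_{ab}$; (iii) $T_a{}^b$ defines a non-singular null-cone preserving map. Moreover, in this case $T_a{}^b$ is bi-preserving, $L_a{}^b=T_a{}^b/\sqrt f$ is a Lorentz transformation, and $T_{ab}\in\mathcal{DP}\cup-\mathcal{DP}$.
   Context: Lorentzian metric $g_{ab}$ of signature $(+,-,\dots,-)$ with a time orientation; null: $v\ne0$, $v_av^a=0$; causal: $v\neq0$, $v_av^a\ge0$. $T_a{}^b$ is a null-cone preserving map if $k^aT_a{}^b$ is null or zero for every null $k$, bi-preserving if also $T_a{}^bk_b$ is null or zero for every null $k$, non-singular if $\det(T_a{}^b)\neq0$. A Lorentz transformation is $L_a{}^b$ with $g_{cd}L_a{}^cL_b{}^d=g_{ab}$. $\mathcal{DP}$ is the set of rank-2 tensors $T_{ab}$ with $T_{ab}u^av^b\ge0$ for all causal future-pointing $u,v$; $-\mathcal{DP}=\{T:-T\in\mathcal{DP}\}$. *)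

theory Defs
  imports "HOL-Analysis.Analysis"
begin

text \<open>Tensors at a point of an N-dimensional spacetime, N = CARD('n), in a fixed
  coordinate basis. A covariant rank-2 tensor X_ab is the matrix with entries X $ a $ b;
  a vector v^a and a covector w_a are elements of real^'n.
  The metric g_ab is a matrix, its inverse g^ab is matrix_inv g.\<close>

definition minkowski :: "'n::finite \<Rightarrow> real^'n^'n" where
  "minkowski i0 = (\<chi> i j. if i = j then (if i = i0 then 1 else -1) else 0)"

definition lorentzian :: "real^('n::finite)^'n \<Rightarrow> bool" where
  "lorentzian g \<longleftrightarrow> transpose g = g \<and>
     (\<exists>(P::real^'n^'n) i0. invertible P \<and> transpose P ** g ** P = minkowski i0)"

definition gip :: "real^'n^'n \<Rightarrow> real^'n \<Rightarrow> real^'n \<Rightarrow> real" where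
  "gip g u v = u \<bullet> (g *v v)"

definition null_vec :: "real^'n^'n \<Rightarrow> real^'n \<Rightarrow> bool" where
  "null_vec g v \<longleftrightarrow> v \<noteq> 0 \<and> gip g v v = 0"

definition null_covec :: "real^'n^'n \<Rightarrow> real^'n \<Rightarrow> bool" where
  "null_covec g w \<longleftrightarrow> w \<noteq> 0 \<and> w \<bullet> (matrix_inv g *v w) = 0"

definition causal_vec :: "real^'n^'n \<Rightarrow> real^'n \<Rightarrow> bool" where
  "causal_vec g v \<longleftrightarrow> v \<noteq> 0 \<and> gip g v v \<ge> 0"

text \<open>Time orientation given by a timelike vector tau (g(tau,tau) > 0):
  a causal vector v is future-pointing iff g(tau,v) > 0.\<close>
definition future_causal :: "real^'n^'n \<Rightarrow> real^'n \<Rightarrow> real^'n \<Rightarrow> bool" where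
  "future_causal g tau v \<longleftrightarrow> causal_vec g v \<and> gip g tau v > 0"

text \<open>Mixed tensor T_a^b = T_ac g^cb.\<close>
definition mixed :: "real^'n^'n \<Rightarrow> real^'n^'n \<Rightarrow> real^'n^'n" where
  "mixed g T = T ** matrix_inv g"

text \<open>M = M_a^b is null-cone preserving: k^a M_a^b null or zero for every null k.\<close>
definition null_cone_preserving :: "real^'n^'n \<Rightarrow> real^'n^'n \<Rightarrow> bool" where
  "null_cone_preserving g M \<longleftrightarrow>
     (\<forall>k. null_vec g k \<longrightarrow> k v* M = 0 \<or> null_vec g (k v* M))"

definition bi_preserving :: "real^'n^'n \<Rightarrow> real^'n^'n \<Rightarrow> bool" where
  "bi_preserving g M \<longleftrightarrow> null_cone_preserving g M \<and>
     (\<forall>k. null_covec g k \<longrightarrow> M *v k = 0 \<or> null_covec g (M *v k))"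

definition lorentz_transf :: "real^'n^'n \<Rightarrow> real^'n^'n \<Rightarrow> bool" where
  "lorentz_transf g L \<longleftrightarrow> (\<forall>a b. (\<Sum>c\<in>UNIV. \<Sum>d\<in>UNIV. g$c$d * L$a$c * L$b$d) = g$a$b)"

definition DP :: "real^'n^'n \<Rightarrow> real^'n \<Rightarrow> real^'n^'n \<Rightarrow> bool" where
  "DP g tau T \<longleftrightarrow> (\<forall>u v. future_causal g tau u \<longrightarrow> future_causal g tau v \<longrightarrow>
       (\<Sum>a\<in>UNIV. \<Sum>b\<in>UNIV. T$a$b * u$a * v$b) \<ge> 0)"

end

theory Submission
  imports Defs
begin

(* Write M = T g^-1 for the mixed tensor, acting on vectors by k |-> k M; condition (i) says
   M g M^T = f g, i.e. M rescales the metric by f. Such an M is invertible with inverse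
   f^-1 g M^T g^-1, which yields the dual identity T^T g^-1 T = f g and the preservation of null
   covectors; it clearly maps null vectors to null vectors. Conversely, a symmetric form that
   vanishes on the null cone of a Lorentzian metric is a multiple of it (polarize on a few null
   vectors of a Minkowski basis), so (iii) gives (i). For N >= 3 the factor is positive: otherwise M
   would map two orthogonal spacelike vectors to two orthogonal timelike ones. Finally, the time
   coordinate c of a Minkowski basis has constant sign on each half of the causal cone, and a map
   rescaling g by f > 0 sends the whole future cone into one half; hence T or -T is in DP. *)

lemma
  fixes A :: "'a::semiring_1^'n^'n"
  assumes "invertible A"
  shows matrix_inv_right: "A ** matrix_inv A = mat 1"
    and matrix_inv_left: "matrix_inv A ** A = mat 1"
proof -
  have "A ** matrix_inv A = mat 1 \<and> matrix_inv A ** A = mat 1"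
    using assms unfolding invertible_def matrix_inv_def by (rule someI_ex)
  then show "A ** matrix_inv A = mat 1" "matrix_inv A ** A = mat 1" by auto
qed

lemma symmetric_matrix_inv:
  fixes g :: "real^'n^'n"
  assumes "transpose g = g" "invertible g"
  shows "transpose (matrix_inv g) = matrix_inv g"
proof -
  have "transpose (matrix_inv g) = transpose (matrix_inv g) ** (g ** matrix_inv g)"
    by (simp add: matrix_inv_right assms)
  also have "\<dots> = transpose (g ** matrix_inv g) ** matrix_inv g"
    by (simp add: matrix_mul_assoc matrix_transpose_mul assms(1))
  also have "\<dots> = matrix_inv g"
    by (simp add: matrix_inv_right assms)
  finally show ?thesis .
qed

lemma cancel_congruence:
  fixes P X Y :: "real^'n^'n"
  assumes "invertible P" "transpose P ** X ** P = transpose P ** Y ** P"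
  shows "X = Y"
proof -
  have "transpose (matrix_inv P) ** (transpose P ** Z ** P) ** matrix_inv P = Z" for Z
    by (simp add: matrix_mul_assoc matrix_inv_right assms(1) flip: matrix_transpose_mul)
      (simp add: matrix_mul_assoc[symmetric] matrix_inv_right assms(1) flip: matrix_transpose_mul)
  from this[of X] this[of Y] show ?thesis using assms(2) by metis
qed

lemma gip_congruence: "gip g (P *v x) (P *v y) = gip (transpose P ** g ** P) x y"
  unfolding gip_def
  by (metis dot_lmul_matrix inner_commute matrix_vector_mul_assoc transpose_matrix_vector)

lemma gip_vector_matrix_mult: "gip g (x v* M) (y v* M) = gip (M ** g ** transpose M) x y"
  using gip_congruence[of g "transpose M"] by simp

lemma gip_scaleR_metric: "gip (c *\<^sub>R g) x y = c * gip g x y"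
  by (simp add: gip_def flip: scaleR_matrix_vector_assoc)

lemma gip_axis: "gip A (axis a 1) (axis b 1) = A $ a $ b"
  by (simp add: gip_def matrix_vector_mult_basis inner_axis' column_def)

lemma gip_zero_left [simp]: "gip g 0 y = 0"
  by (simp add: gip_def)

lemma gip_zero_right [simp]: "gip g x 0 = 0"
  by (simp add: gip_def)

lemma gip_minus_left [simp]: "gip g (- x) y = - gip g x y"
  by (simp add: gip_def)

lemma gip_minus_right [simp]: "gip g x (- y) = - gip g x y"
  by (simp add: gip_def vec.neg)

lemma gip_symmetric:
  assumes "transpose g = g"
  shows "gip g x y = gip g y x"
  by (metis assms gip_def dot_lmul_matrix inner_commute transpose_matrix_vector)

lemma gip_diff_expand:
  assumes "transpose g = g"
  shows "gip g (a *\<^sub>R x - b *\<^sub>R y) (a *\<^sub>R x - b *\<^sub>R y)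
    = a * a * gip g x x - 2 * a * b * gip g x y + b * b * gip g y y"
  using gip_symmetric[OF assms, of y x]
  by (simp add: gip_def algebra_simps)

section \<open>Minkowski space\<close>

lemma minkowski_entries [simp]:
  "minkowski i0 $ i0 $ i0 = 1"
  "i \<noteq> i0 \<Longrightarrow> minkowski i0 $ i $ i = -1"
  "i \<noteq> j \<Longrightarrow> minkowski i0 $ i $ j = 0"
  by (auto simp: minkowski_def)

lemma minkowski_mult_vector: "(minkowski i0 *v z) $ k = (if k = i0 then z $ k else - z $ k)"
proof -
  have "(minkowski i0 *v z) $ k = (\<Sum>j\<in>UNIV. if k = j then (if k = i0 then z $ j else - z $ j) else 0)"
    unfolding matrix_vector_mult_def minkowski_def vec_lambda_beta
    by (rule sum.cong) auto
  then show ?thesis by simp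
qed

lemma minkowski_involution: "minkowski i0 ** minkowski i0 = mat 1"
  unfolding matrix_eq
  by (simp add: vec_eq_iff minkowski_mult_vector flip: matrix_vector_mul_assoc)

definition spatial_part :: "'n::finite \<Rightarrow> real^'n \<Rightarrow> real^'n" where
  "spatial_part i0 y = (\<chi> k. if k = i0 then 0 else y $ k)"

lemma gip_minkowski:
  "gip (minkowski i0) y z = y $ i0 * z $ i0 - spatial_part i0 y \<bullet> spatial_part i0 z"
proof -
  have "gip (minkowski i0) y z + spatial_part i0 y \<bullet> spatial_part i0 z
      = (\<Sum>k\<in>UNIV. if k = i0 then y $ k * z $ k else 0)"
    unfolding gip_def inner_vec_def sum.distrib[symmetric]
    by (rule sum.cong) (auto simp: minkowski_mult_vector spatial_part_def)
  then show ?thesis by simp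
qed

lemma minkowski_causal_time_nonzero:
  assumes "causal_vec (minkowski i0) z"
  shows "z $ i0 \<noteq> 0"
proof
  assume z0: "z $ i0 = 0"
  then have "spatial_part i0 z \<bullet> spatial_part i0 z \<le> 0"
    using assms by (simp add: causal_vec_def gip_minkowski)
  then have "spatial_part i0 z = 0" by (metis inner_eq_zero_iff inner_ge_zero order_antisym)
  then have "z = 0" using z0 by (auto simp: spatial_part_def vec_eq_iff split: if_splits)
  then show False using assms by (simp add: causal_vec_def)
qed

lemma minkowski_causal_gip_nonneg:
  assumes "gip (minkowski i0) y y \<ge> 0" "gip (minkowski i0) z z \<ge> 0" "y $ i0 * z $ i0 \<ge> 0"
  shows "gip (minkowski i0) y z \<ge> 0"
proof -
  let ?a = "spatial_part i0 y" and ?b = "spatial_part i0 z"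
  have "norm ?a ^ 2 \<le> \<bar>y $ i0\<bar> ^ 2"
    using assms(1) unfolding power2_norm_eq_inner by (simp add: gip_minkowski power2_eq_square)
  then have a: "norm ?a \<le> \<bar>y $ i0\<bar>" by (rule power2_le_imp_le) simp
  have "norm ?b ^ 2 \<le> \<bar>z $ i0\<bar> ^ 2"
    using assms(2) unfolding power2_norm_eq_inner by (simp add: gip_minkowski power2_eq_square)
  then have b: "norm ?b \<le> \<bar>z $ i0\<bar>" by (rule power2_le_imp_le) simp
  have "?a \<bullet> ?b \<le> norm ?a * norm ?b" by (rule norm_cauchy_schwarz)
  also have "\<dots> \<le> \<bar>y $ i0\<bar> * \<bar>z $ i0\<bar>" using a b by (simp add: mult_mono)
  also have "\<dots> = y $ i0 * z $ i0" using assms(3) by (simp add: abs_mult[symmetric])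
  finally show ?thesis by (simp add: gip_minkowski)
qed

lemma gip_axis_combination:
  fixes A :: "real^'n^'n"
  shows "gip A (a *\<^sub>R axis p 1 + b *\<^sub>R axis q 1 + c *\<^sub>R axis r 1)
      (a *\<^sub>R axis p 1 + b *\<^sub>R axis q 1 + c *\<^sub>R axis r 1)
    = a*a*A$p$p + a*b*A$p$q + a*c*A$p$r + b*a*A$q$p + b*b*A$q$q + b*c*A$q$r
     + c*a*A$r$p + c*b*A$r$q + c*c*A$r$r"
  by (simp add: gip_def inner_add_left inner_add_right matrix_vector_right_distrib
      matrix_vector_mult_scaleR gip_axis[unfolded gip_def] algebra_simps)

text \<open>Polarization on the null vectors \<open>e\<^sub>0 \<plusminus> e\<^sub>i\<close> and \<open>5e\<^sub>0 + 3e\<^sub>i + 4e\<^sub>j\<close>.\<close>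
lemma minkowski_form_vanishing_on_null_cone:
  fixes A :: "real^'n^'n"
  assumes sym: "transpose A = A"
    and null: "\<And>y. gip (minkowski i0) y y = 0 \<Longrightarrow> gip A y y = 0"
  shows "A = A $ i0 $ i0 *\<^sub>R minkowski i0"
proof -
  let ?e = "\<lambda>k. axis k (1::real)"
  have Asym: "A $ a $ b = A $ b $ a" for a b
    by (metis sym transpose_def vec_lambda_beta)
  have plus: "A$i0$i0 + A$i0$i + A$i$i0 + A$i$i = 0" if "i \<noteq> i0" for i
    using null[of "1 *\<^sub>R ?e i0 + 1 *\<^sub>R ?e i + 0 *\<^sub>R ?e i"] that
    unfolding gip_axis_combination by simp
  have minus: "A$i0$i0 - A$i0$i - A$i$i0 + A$i$i = 0" if "i \<noteq> i0" for i
    using null[of "1 *\<^sub>R ?e i0 + (-1) *\<^sub>R ?e i + 0 *\<^sub>R ?e i"] that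
    unfolding gip_axis_combination by simp
  have time_space: "A$i0$i = 0" "A$i$i0 = 0" "A$i$i = - A$i0$i0" if "i \<noteq> i0" for i
    using plus[OF that] minus[OF that] Asym[of i0 i] by linarith+
  have space_space: "A$i$j = 0" if "i \<noteq> i0" "j \<noteq> i0" "i \<noteq> j" for i j
  proof -
    have "25*A$i0$i0 + 9*A$i$i + 16*A$j$j + 15*(A$i0$i + A$i$i0) + 20*(A$i0$j + A$j$i0)
          + 12*(A$i$j + A$j$i) = 0"
      using null[of "5 *\<^sub>R ?e i0 + 3 *\<^sub>R ?e i + 4 *\<^sub>R ?e j"] that
      unfolding gip_axis_combination by (simp add: algebra_simps)
    then show ?thesis
      using time_space[OF that(1)] time_space[OF that(2)] Asym[of i j] by (simp add: algebra_simps)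
  qed
  show ?thesis
    unfolding vec_eq_iff
  proof (intro allI)
    fix a b
    show "A $ a $ b = (A $ i0 $ i0 *\<^sub>R minkowski i0) $ a $ b"
      using time_space[of a] time_space[of b] space_space[of a b]
      by (cases "a = i0"; cases "b = i0"; cases "a = b") auto
  qed
qed

lemma lorentzian_invertible:
  fixes g :: "real^'n^'n"
  assumes "lorentzian g"
  shows "invertible g"
proof -
  obtain P :: "real^'n^'n" and i0 where "transpose P ** g ** P = minkowski i0"
    using assms by (auto simp: lorentzian_def)
  then have "det (transpose P) * det g * det P \<noteq> 0"
    using minkowski_involution[of i0] by (metis det_I det_mul mult_zero_left zero_neq_one)
  then show ?thesis by (simp add: invertible_det_nz)
qed

lemma lorentzian_orthogonal_spacelike:
  assumes "CARD('n) \<ge> 3" and "lorentzian (g :: real^'n^'n)"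
  obtains x y where "gip g x x < 0" "gip g y y < 0" "gip g x y = 0"
proof -
  obtain P :: "real^'n^'n" and i0 where P: "transpose P ** g ** P = minkowski i0"
    using assms(2) by (auto simp: lorentzian_def)
  have "2 \<le> card (UNIV - {i0})"
    using assms(1) by (simp add: card_Diff_singleton)
  then obtain S where "S \<subseteq> UNIV - {i0}" "card S = 2"
    by (meson obtain_subset_with_card_n)
  then obtain i j where "i \<noteq> i0" "j \<noteq> i0" "i \<noteq> j"
    by (auto simp: card_2_iff)
  have "gip g (P *v axis a 1) (P *v axis b 1) = minkowski i0 $ a $ b" for a b
    by (simp add: gip_congruence P gip_axis)
  then show ?thesis
    using that[of "P *v axis i 1" "P *v axis j 1"] \<open>i \<noteq> i0\<close> \<open>j \<noteq> i0\<close> \<open>i \<noteq> j\<close> by simp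
qed

section \<open>Time covectors\<close>

definition time_covector :: "real^'n^'n \<Rightarrow> real^'n \<Rightarrow> bool" where
  "time_covector g c \<longleftrightarrow>
     (\<forall>x. causal_vec g x \<longrightarrow> c \<bullet> x \<noteq> 0) \<and>
     (\<forall>x y. causal_vec g x \<longrightarrow> causal_vec g y \<longrightarrow> (c \<bullet> x) * (c \<bullet> y) > 0 \<longrightarrow> gip g x y \<ge> 0)"

lemma minkowski_time_covector: "time_covector (minkowski i0) (axis i0 1)"
proof -
  have time: "axis i0 1 \<bullet> x = x $ i0" for x
    by (simp add: inner_axis')
  show ?thesis
    unfolding time_covector_def time causal_vec_def
    using minkowski_causal_time_nonzero[unfolded causal_vec_def] minkowski_causal_gip_nonneg
    by (meson less_imp_le)
qed

lemma time_covector_uminus: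
  "time_covector g c \<Longrightarrow> time_covector g (- c)"
  by (simp add: time_covector_def)

lemma time_covector_congruence:
  fixes P g :: "real^'n^'n"
  assumes P: "invertible P" and c: "time_covector (transpose P ** g ** P) c"
  shows "time_covector g (c v* matrix_inv P)"
proof -
  let ?Q = "matrix_inv P"
  have PQ: "P *v (?Q *v x) = x" for x
    by (simp add: matrix_vector_mul_assoc matrix_inv_right P)
  have gip_eq: "gip (transpose P ** g ** P) (?Q *v x) (?Q *v y) = gip g x y" for x y
    by (simp flip: gip_congruence add: PQ)
  have "?Q *v x \<noteq> 0 \<longleftrightarrow> x \<noteq> 0" for x
    by (metis PQ matrix_vector_mult_0_right)
  then have causal: "causal_vec (transpose P ** g ** P) (?Q *v x) \<longleftrightarrow> causal_vec g x" for x
    by (simp add: causal_vec_def gip_eq)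
  have time: "(c v* ?Q) \<bullet> x = c \<bullet> (?Q *v x)" for x
    by (rule dot_lmul_matrix)
  show ?thesis
    using c unfolding time_covector_def time by (metis causal gip_eq)
qed

lemma time_covector_same_sign:
  assumes c: "time_covector g c" and "causal_vec g x" "causal_vec g y" "gip g x y > 0"
  shows "(c \<bullet> x) * (c \<bullet> y) > 0"
proof (rule ccontr)
  assume "\<not> ?thesis"
  moreover have "c \<bullet> x \<noteq> 0" "c \<bullet> y \<noteq> 0"
    using assms(1-3) by (auto simp: time_covector_def)
  ultimately have "(c \<bullet> x) * (c \<bullet> (- y)) > 0"
    by (simp add: linorder_not_less order_le_less)
  moreover have "causal_vec g (- y)" using assms(3) by (simp add: causal_vec_def)
  ultimately have "gip g x (- y) \<ge> 0"
    using c \<open>causal_vec g x\<close> unfolding time_covector_def by blast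
  then show False using assms(4) by simp
qed

lemma time_covector_orthogonal_timelike:
  assumes g: "transpose g = g" and c: "time_covector g c"
    and x: "gip g x x > 0" and y: "gip g y y > 0"
  shows "gip g x y \<noteq> 0"
proof
  assume xy: "gip g x y = 0"
  define z where "z = (c \<bullet> y) *\<^sub>R x - (c \<bullet> x) *\<^sub>R y"
  have "c \<bullet> z = 0" by (simp add: z_def inner_diff_right)
  have "causal_vec g x" using x by (auto simp: causal_vec_def)
  then have "c \<bullet> x \<noteq> 0" using c by (simp add: time_covector_def)
  have "gip g z z = (c \<bullet> y) * (c \<bullet> y) * gip g x x + (c \<bullet> x) * (c \<bullet> x) * gip g y y"
    unfolding z_def gip_diff_expand[OF g] xy by simp
  also have "\<dots> > 0"
  proof (rule add_nonneg_pos)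
    show "(c \<bullet> y) * (c \<bullet> y) * gip g x x \<ge> 0" using x by simp
    show "(c \<bullet> x) * (c \<bullet> x) * gip g y y > 0"
      using y \<open>c \<bullet> x \<noteq> 0\<close> by (metis mult_pos_pos not_real_square_gt_zero)
  qed
  finally have "causal_vec g z" by (auto simp: causal_vec_def)
  then show False using c \<open>c \<bullet> z = 0\<close> by (simp add: time_covector_def)
qed

lemma lorentzian_time_covector:
  fixes g :: "real^'n^'n"
  assumes "lorentzian g"
  obtains c where "time_covector g c"
proof -
  obtain P :: "real^'n^'n" and i0 where P: "invertible P" "transpose P ** g ** P = minkowski i0"
    using assms by (auto simp: lorentzian_def)
  show ?thesis
    using time_covector_congruence[OF P(1)] minkowski_time_covector P(2) that by metis
qed

section \<open>Conformal maps\<close>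

lemma conformal_gip:
  assumes "M ** g ** transpose M = f *\<^sub>R g"
  shows "gip g (x v* M) (y v* M) = f * gip g x y"
  by (simp add: gip_vector_matrix_mult assms gip_scaleR_metric)

lemma preserves_null_imp_conformal:
  fixes g M :: "real^'n^'n"
  assumes "lorentzian g"
    and null: "\<And>k. gip g k k = 0 \<Longrightarrow> gip g (k v* M) (k v* M) = 0"
  obtains f where "M ** g ** transpose M = f *\<^sub>R g"
proof -
  obtain P :: "real^'n^'n" and i0 where P: "invertible P" "transpose P ** g ** P = minkowski i0"
    and g: "transpose g = g"
    using assms(1) by (auto simp: lorentzian_def)
  define A where "A = transpose P ** (M ** g ** transpose M) ** P"
  have "transpose A = A"
    by (simp add: A_def matrix_transpose_mul g matrix_mul_assoc)
  moreover have "gip A y y = 0" if "gip (minkowski i0) y y = 0" for y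
  proof -
    have "gip g (P *v y) (P *v y) = 0" using that by (simp add: gip_congruence P(2))
    then show ?thesis by (simp add: A_def null flip: gip_congruence gip_vector_matrix_mult)
  qed
  ultimately have "A = A $ i0 $ i0 *\<^sub>R minkowski i0"
    by (rule minkowski_form_vanishing_on_null_cone)
  also have "\<dots> = transpose P ** (A $ i0 $ i0 *\<^sub>R g) ** P"
    by (simp add: P(2) matrix_scalar_ac flip: scalar_matrix_assoc)
  finally have "M ** g ** transpose M = A $ i0 $ i0 *\<^sub>R g"
    unfolding A_def by (rule cancel_congruence[OF P(1)])
  then show ?thesis by (rule that)
qed

lemma conformal_inverse:
  fixes g M :: "real^'n^'n"
  assumes g: "invertible g" and f: "f \<noteq> 0" and M: "M ** g ** transpose M = f *\<^sub>R g"
  shows "M ** ((1 / f) *\<^sub>R (g ** transpose M ** matrix_inv g)) = mat 1"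
    and "((1 / f) *\<^sub>R (g ** transpose M ** matrix_inv g)) ** M = mat 1"
proof -
  have "M ** ((1 / f) *\<^sub>R (g ** transpose M ** matrix_inv g))
      = (1 / f) *\<^sub>R ((M ** g ** transpose M) ** matrix_inv g)"
    by (simp add: matrix_mul_assoc matrix_scalar_ac flip: scalar_matrix_assoc)
  also have "\<dots> = mat 1"
    using f by (simp add: M scalar_matrix_assoc matrix_inv_right g)
  finally show "M ** ((1 / f) *\<^sub>R (g ** transpose M ** matrix_inv g)) = mat 1" .
  then show "((1 / f) *\<^sub>R (g ** transpose M ** matrix_inv g)) ** M = mat 1"
    by (simp add: matrix_left_right_inverse)
qed

lemma conformal_invertible:
  fixes g M :: "real^'n^'n"
  assumes "invertible g" "f \<noteq> 0" "M ** g ** transpose M = f *\<^sub>R g"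
  shows "invertible M"
  using conformal_inverse[OF assms] unfolding invertible_def by blast

lemma conformal_inverse_metric:
  fixes g M :: "real^'n^'n"
  assumes g: "invertible g" and f: "f \<noteq> 0" and M: "M ** g ** transpose M = f *\<^sub>R g"
  shows "transpose M ** matrix_inv g ** M = f *\<^sub>R matrix_inv g"
proof -
  have "g ** (transpose M ** matrix_inv g ** M) = f *\<^sub>R mat 1"
    using arg_cong[OF conformal_inverse(2)[OF assms], of "(*\<^sub>R) f"] f
    by (simp add: scalar_matrix_assoc matrix_mul_assoc)
  then have "matrix_inv g ** (g ** (transpose M ** matrix_inv g ** M)) = f *\<^sub>R matrix_inv g"
    by (simp add: matrix_scalar_ac)
  then show ?thesis
    by (simp add: matrix_mul_assoc matrix_inv_left g)
qed

lemma conformal_bi_preserving: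
  fixes g M :: "real^'n^'n"
  assumes g: "invertible g" and f: "f \<noteq> 0" and M: "M ** g ** transpose M = f *\<^sub>R g"
  shows "bi_preserving g M"
proof -
  obtain M' where M': "M ** M' = mat 1" "M' ** M = mat 1"
    using conformal_invertible[OF assms] unfolding invertible_def by blast
  have inj_left: "x v* M = 0 \<Longrightarrow> x = 0" for x
    by (metis M'(1) vector_matrix_mul_assoc vector_matrix_mul_rid vector_matrix_mult_0)
  have inj_right: "M *v x = 0 \<Longrightarrow> x = 0" for x
    by (metis M'(2) matrix_vector_mul_assoc matrix_vector_mul_lid matrix_vector_mult_0_right)
  have "null_vec g (k v* M)" if "null_vec g k" for k
    using that inj_left by (auto simp: null_vec_def conformal_gip[OF M])
  moreover have "null_covec g (M *v k)" if "null_covec g k" for k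
  proof -
    have "gip (matrix_inv g) (M *v k) (M *v k) = f * gip (matrix_inv g) k k"
      by (simp add: gip_congruence conformal_inverse_metric[OF assms] gip_scaleR_metric)
    then show ?thesis
      using that inj_right by (auto simp: null_covec_def gip_def)
  qed
  ultimately show ?thesis
    by (simp add: bi_preserving_def null_cone_preserving_def)
qed

lemma conformal_iff_null_cone_preserving:
  fixes g M :: "real^'n^'n"
  assumes g: "lorentzian g"
  shows "(\<exists>f. f \<noteq> 0 \<and> M ** g ** transpose M = f *\<^sub>R g)
    \<longleftrightarrow> null_cone_preserving g M \<and> det M \<noteq> 0"
proof
  assume "\<exists>f. f \<noteq> 0 \<and> M ** g ** transpose M = f *\<^sub>R g"
  then obtain f where f: "f \<noteq> 0" "M ** g ** transpose M = f *\<^sub>R g" by blast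
  show "null_cone_preserving g M \<and> det M \<noteq> 0"
    using conformal_bi_preserving[OF lorentzian_invertible[OF g] f]
      conformal_invertible[OF lorentzian_invertible[OF g] f]
    by (simp add: bi_preserving_def invertible_det_nz)
next
  assume M: "null_cone_preserving g M \<and> det M \<noteq> 0"
  have "gip g (k v* M) (k v* M) = 0" if "gip g k k = 0" for k
    using that M by (cases "k = 0") (auto simp: null_cone_preserving_def null_vec_def)
  then obtain f where f: "M ** g ** transpose M = f *\<^sub>R g"
    using preserves_null_imp_conformal[OF g] by blast
  have "det (M ** g ** transpose M) \<noteq> 0"
    using M lorentzian_invertible[OF g] by (simp add: det_mul invertible_det_nz)
  then have "f \<noteq> 0" using f det_0 by auto
  then show "\<exists>f. f \<noteq> 0 \<and> M ** g ** transpose M = f *\<^sub>R g" using f by blast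
qed

lemma conformal_factor_pos:
  fixes g M :: "real^'n^'n"
  assumes "CARD('n) \<ge> 3" and g: "lorentzian g"
    and f: "f \<noteq> 0" and M: "M ** g ** transpose M = f *\<^sub>R g"
  shows "f > 0"
proof (rule ccontr)
  assume "\<not> f > 0"
  with f have "f < 0" by simp
  obtain x y where x: "gip g x x < 0" and y: "gip g y y < 0" and xy: "gip g x y = 0"
    using lorentzian_orthogonal_spacelike[OF assms(1,2)] by blast
  obtain c where c: "time_covector g c"
    using lorentzian_time_covector[OF g] by blast
  have "transpose g = g" using g by (simp add: lorentzian_def)
  from time_covector_orthogonal_timelike[OF this c, of "x v* M" "y v* M"]
  show False
    using x y xy \<open>f < 0\<close> by (simp add: conformal_gip[OF M] mult_neg_neg)
qed

lemma lorentz_transf_iff: "lorentz_transf g L \<longleftrightarrow> L ** g ** transpose L = g"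
proof -
  have "(L ** g ** transpose L) $ a $ b = (\<Sum>c\<in>UNIV. \<Sum>d\<in>UNIV. g$c$d * L$a$c * L$b$d)" for a b
  proof -
    have "(L ** g ** transpose L) $ a $ b = (\<Sum>d\<in>UNIV. \<Sum>c\<in>UNIV. g$c$d * L$a$c * L$b$d)"
      unfolding matrix_matrix_mult_def transpose_def
      by (simp add: sum_distrib_left sum_distrib_right mult_ac)
    also have "\<dots> = (\<Sum>c\<in>UNIV. \<Sum>d\<in>UNIV. g$c$d * L$a$c * L$b$d)"
      by (rule sum.swap)
    finally show ?thesis .
  qed
  then show ?thesis unfolding lorentz_transf_def by (auto simp: vec_eq_iff)
qed

lemma conformal_lorentz_transf:
  assumes "f > 0" and "M ** g ** transpose M = f *\<^sub>R g"
  shows "lorentz_transf g ((1 / sqrt f) *\<^sub>R M)"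
proof -
  have "((1 / sqrt f) *\<^sub>R M) ** g ** transpose ((1 / sqrt f) *\<^sub>R M)
      = (1 / sqrt f * (1 / sqrt f)) *\<^sub>R (M ** g ** transpose M)"
    by (simp add: transpose_scalar matrix_scalar_ac scalar_matrix_assoc)
  also have "\<dots> = g" using assms by simp
  finally show ?thesis by (simp add: lorentz_transf_iff)
qed

lemma conformal_time_orientation:
  fixes g M :: "real^'n^'n"
  assumes c: "time_covector g c" and tau: "gip g tau tau > 0" "c \<bullet> tau > 0"
    and f: "f > 0" and M: "M ** g ** transpose M = f *\<^sub>R g"
  shows "(\<forall>u v. future_causal g tau u \<longrightarrow> future_causal g tau v \<longrightarrow> gip g (u v* M) v \<ge> 0)
       \<or> (\<forall>u v. future_causal g tau u \<longrightarrow> future_causal g tau v \<longrightarrow> gip g (u v* M) v \<le> 0)"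
proof -
  have causal_tau: "causal_vec g tau" using tau(1) by (auto simp: causal_vec_def)
  have future_pos: "c \<bullet> v > 0" if "future_causal g tau v" for v
    using time_covector_same_sign[OF c causal_tau, of v] that tau(2)
    by (auto simp: future_causal_def zero_less_mult_iff)
  have "gip g (tau v* M) (tau v* M) > 0"
    using tau(1) f by (simp add: conformal_gip[OF M])
  then have causal_tau_image: "causal_vec g (tau v* M)"
    by (auto simp: causal_vec_def)
  let ?s = "c \<bullet> (tau v* M)"
  have image_sign: "?s * (c \<bullet> (u v* M)) > 0" and causal_image: "causal_vec g (u v* M)"
    if "future_causal g tau u" for u
  proof -
    have u: "causal_vec g u" "gip g tau u > 0" using that by (auto simp: future_causal_def)
    have cross: "gip g (tau v* M) (u v* M) > 0"
      using u(2) f by (simp add: conformal_gip[OF M])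
    then have "u v* M \<noteq> 0" by auto
    then show "causal_vec g (u v* M)"
      using u(1) f by (simp add: causal_vec_def conformal_gip[OF M])
    then show "?s * (c \<bullet> (u v* M)) > 0"
      using time_covector_same_sign[OF c causal_tau_image _ cross] by blast
  qed
  have "?s \<noteq> 0" using c causal_tau_image by (simp add: time_covector_def)
  then consider "?s > 0" | "?s < 0" by linarith
  then show ?thesis
  proof cases
    case 1
    have "gip g (u v* M) v \<ge> 0" if "future_causal g tau u" "future_causal g tau v" for u v
    proof -
      have "(c \<bullet> (u v* M)) * (c \<bullet> v) > 0"
        using image_sign[OF that(1)] future_pos[OF that(2)] 1 by (simp add: zero_less_mult_iff)
      then show ?thesis
        using c causal_image[OF that(1)] that(2) by (auto simp: time_covector_def future_causal_def)
    qed
    then show ?thesis by blast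
  next
    case 2
    have "gip g (u v* M) (- v) \<ge> 0" if "future_causal g tau u" "future_causal g tau v" for u v
    proof -
      have "(c \<bullet> (u v* M)) * (c \<bullet> (- v)) > 0"
        using image_sign[OF that(1)] future_pos[OF that(2)] 2
        by (simp add: zero_less_mult_iff mult_neg_pos)
      moreover have "causal_vec g (- v)" using that(2) by (simp add: future_causal_def causal_vec_def)
      ultimately show ?thesis
        using c causal_image[OF that(1)] unfolding time_covector_def by blast
    qed
    then show ?thesis by fastforce
  qed
qed

lemma tensor_contraction_eq_inner:
  "(\<Sum>a\<in>UNIV. \<Sum>b\<in>UNIV. X $ a $ b * u $ a * v $ b) = u \<bullet> (X *v v)"
  unfolding inner_vec_def matrix_vector_mult_def
  by (simp add: sum_distrib_left mult.commute mult.left_commute)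

lemma conformal_DP:
  fixes g M :: "real^'n^'n"
  assumes g: "lorentzian g" and tau: "gip g tau tau > 0"
    and f: "f > 0" and M: "M ** g ** transpose M = f *\<^sub>R g"
  shows "DP g tau (M ** g) \<or> DP g tau (- (M ** g))"
proof -
  obtain c0 where c0: "time_covector g c0"
    using lorentzian_time_covector[OF g] by blast
  have "causal_vec g tau" using tau by (auto simp: causal_vec_def)
  then have "c0 \<bullet> tau \<noteq> 0" using c0 by (simp add: time_covector_def)
  then obtain c where c: "time_covector g c" "c \<bullet> tau > 0"
    using c0 time_covector_uminus[OF c0]
    by (metis inner_minus_left linorder_neqE_linordered_idom neg_0_less_iff_less)
  have contraction: "(\<Sum>a\<in>UNIV. \<Sum>b\<in>UNIV. (M ** g) $ a $ b * u $ a * v $ b) = gip g (u v* M) v"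
    for u v
    by (simp add: tensor_contraction_eq_inner gip_def dot_lmul_matrix flip: matrix_vector_mul_assoc)
  have neg_contraction:
    "(\<Sum>a\<in>UNIV. \<Sum>b\<in>UNIV. (- (M ** g)) $ a $ b * u $ a * v $ b) = - gip g (u v* M) v" for u v
    by (simp add: contraction[symmetric] sum_negf)
  show ?thesis
    using conformal_time_orientation[OF c(1) tau c(2) f M]
    unfolding DP_def contraction neg_contraction by auto
qed

lemma mixed_times_metric:
  assumes "invertible g"
  shows "mixed g T ** g = T"
  by (simp add: mixed_def matrix_inv_left assms flip: matrix_mul_assoc)

lemma mixed_conformal_iff:
  assumes "transpose g = g" "invertible g"
  shows "T ** matrix_inv g ** transpose T = mixed g T ** g ** transpose (mixed g T)"
  by (simp add: mixed_def matrix_transpose_mul symmetric_matrix_inv assms matrix_mul_assoc)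
    (simp add: matrix_inv_left assms flip: matrix_mul_assoc)

lemma conformal_transpose:
  fixes g T :: "real^'n^'n"
  assumes g: "transpose g = g" "invertible g"
    and f: "f \<noteq> 0" and T: "T ** matrix_inv g ** transpose T = f *\<^sub>R g"
  shows "transpose T ** matrix_inv g ** T = f *\<^sub>R g"
proof -
  define M where "M = mixed g T"
  have TM: "T = M ** g"
    unfolding M_def by (rule mixed_times_metric[OF g(2), symmetric])
  have M: "M ** g ** transpose M = f *\<^sub>R g"
    using T unfolding M_def by (simp add: mixed_conformal_iff g)
  have "transpose T ** matrix_inv g ** T = g ** (transpose M ** matrix_inv g ** M) ** g"
    unfolding TM by (simp add: matrix_transpose_mul g matrix_mul_assoc)
  also have "\<dots> = f *\<^sub>R g"
    by (simp add: conformal_inverse_metric[OF g(2) f M] matrix_scalar_ac matrix_inv_right g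
        flip: scalar_matrix_assoc)
  finally show ?thesis .
qed

theorem mainTheorem10:
  fixes g T :: "real^'n^'n" and tau :: "real^'n"
  assumes "CARD('n) \<ge> 3"
    and "lorentzian g"
    and "gip g tau tau > 0"
  shows "((\<exists>f::real. f \<noteq> 0 \<and> T ** matrix_inv g ** transpose T = f *\<^sub>R g)
           \<longleftrightarrow> (\<exists>f::real. f > 0 \<and> T ** matrix_inv g ** transpose T = f *\<^sub>R g
                      \<and> transpose T ** matrix_inv g ** T = f *\<^sub>R g))
       \<and> ((\<exists>f::real. f \<noteq> 0 \<and> T ** matrix_inv g ** transpose T = f *\<^sub>R g)
           \<longleftrightarrow> (null_cone_preserving g (mixed g T) \<and> det (mixed g T) \<noteq> 0))
       \<and> ((\<exists>f::real. f \<noteq> 0 \<and> T ** matrix_inv g ** transpose T = f *\<^sub>R g)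
           \<longrightarrow> bi_preserving g (mixed g T)
             \<and> (\<forall>f::real. T ** matrix_inv g ** transpose T = f *\<^sub>R g
                    \<longrightarrow> lorentz_transf g ((1 / sqrt f) *\<^sub>R mixed g T))
             \<and> (DP g tau T \<or> DP g tau (- T)))"
proof -
  have g: "transpose g = g" "invertible g"
    using assms(2) lorentzian_invertible by (auto simp: lorentzian_def)
  define M where "M = mixed g T"
  have TM: "T = M ** g"
    unfolding M_def by (rule mixed_times_metric[OF g(2), symmetric])
  have conformal_M: "T ** matrix_inv g ** transpose T = M ** g ** transpose M"
    unfolding M_def by (rule mixed_conformal_iff[OF g])
  have "g \<noteq> 0" using g(2) det_0 by (auto simp: invertible_det_nz)
  have consequences: "f > 0 \<and> transpose T ** matrix_inv g ** T = f *\<^sub>R g \<and> bi_preserving g M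
      \<and> (\<forall>f'. M ** g ** transpose M = f' *\<^sub>R g \<longrightarrow> lorentz_transf g ((1 / sqrt f') *\<^sub>R M))
      \<and> (DP g tau T \<or> DP g tau (- T))"
    if f: "f \<noteq> 0" "M ** g ** transpose M = f *\<^sub>R g" for f
  proof (intro conjI allI impI)
    show pos: "f > 0"
      by (rule conformal_factor_pos[OF assms(1,2) f])
    show "transpose T ** matrix_inv g ** T = f *\<^sub>R g"
      using conformal_transpose[OF g f(1)] f(2) conformal_M by simp
    show "bi_preserving g M"
      by (rule conformal_bi_preserving[OF g(2) f])
    show "lorentz_transf g ((1 / sqrt f') *\<^sub>R M)" if "M ** g ** transpose M = f' *\<^sub>R g" for f'
    proof -
      have "f' = f" using that f(2) \<open>g \<noteq> 0\<close> by simp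
      then show ?thesis using conformal_lorentz_transf[OF pos f(2)] by simp
    qed
    show "DP g tau T \<or> DP g tau (- T)"
      unfolding TM by (rule conformal_DP[OF assms(2,3) pos f(2)])
  qed
  show ?thesis
    unfolding M_def[symmetric] conformal_M conformal_iff_null_cone_preserving[OF assms(2), symmetric]
    using consequences by (metis less_irrefl)
qed

end
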